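(* Let $G\subset\mathrm{Diff}(\mathbb{C},0)$ be a finitely generated $L$-stable subgroup. Then $G$ is finite cyclic or of circle type. In particular, any finitely generated resonant subgroup of an $L$-stable group is finite. Moreover, $G$ is finite if it admits a non-trivial pseudo-orbit which is closed off the origin (or closed), and $G$ is finite provided that some non-trivial pseudo-orbit is not recurrent.
   Context: $\mathrm{Diff}(\mathbb{C},0)$ is the group of germs at $0\in\mathbb{C}$ of holomorphic diffeomorphisms fixing $0$; a germ writes $f(z)=e^{2\pi i\lambda}z+\dots$. The germ is resonant if $\lambda\in\mathbb{Q}$, and (real) non-resonant if $\lambda\in\mathbb{R}\setminus\mathbb{Q}$. A group is resonant if all its elements are resonant. A subgroup $G$ is of circle type if it is abelian and contains a real non-resonant analytically linearizable element. For a finitely generated group of germs, fix representatives of the generators on a neighborhood of $0$; the pseudo-orbit of a point $z$ is the set of points obtained from $z$ by applying finite compositions of generators and their inverses whenever defined. $G$ is $L$-stable if for every neighborhood $U$ of $0$ there is a neighborhood $0\in V\subset U$ such that the pseudo-orbit of every point $p\in V$ remains in $U$. *)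

theory Defs
  imports "HOL-Analysis.Analysis"
begin

text \<open>Germs at 0 are represented by functions complex \<Rightarrow> complex, two functions
  defining the same germ iff they agree on a neighbourhood of 0.\<close>

definition germ_eq :: "(complex \<Rightarrow> complex) \<Rightarrow> (complex \<Rightarrow> complex) \<Rightarrow> bool" where
  "germ_eq f g \<longleftrightarrow> (\<forall>\<^sub>F z in nhds 0. f z = g z)"

definition diff0 :: "(complex \<Rightarrow> complex) \<Rightarrow> bool" where
  "diff0 f \<longleftrightarrow> (\<exists>U. open U \<and> 0 \<in> U \<and> f holomorphic_on U \<and> inj_on f U \<and> f 0 = 0)"

definition germ_subgroup :: "(complex \<Rightarrow> complex) set \<Rightarrow> bool" where
  "germ_subgroup H \<longleftrightarrow>
     (\<forall>g\<in>H. diff0 g) \<and>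
     (\<forall>g\<in>H. \<forall>g'. germ_eq g' g \<longrightarrow> g' \<in> H) \<and>
     id \<in> H \<and>
     (\<forall>g\<in>H. \<forall>h\<in>H. g \<circ> h \<in> H) \<and>
     (\<forall>g\<in>H. \<exists>k\<in>H. germ_eq (g \<circ> k) id \<and> germ_eq (k \<circ> g) id)"

definition gen_by :: "(complex \<Rightarrow> complex) set \<Rightarrow> (complex \<Rightarrow> complex) set" where
  "gen_by F = \<Inter>{H. germ_subgroup H \<and> F \<subseteq> H}"

definition germ_finite :: "(complex \<Rightarrow> complex) set \<Rightarrow> bool" where
  "germ_finite H \<longleftrightarrow> finite ((\<lambda>g. {h. germ_eq h g}) ` H)"

definition finite_cyclic :: "(complex \<Rightarrow> complex) set \<Rightarrow> bool" where
  "finite_cyclic H \<longleftrightarrow> germ_finite H \<and> (\<exists>g\<in>H. \<forall>h\<in>H. \<exists>n::nat. germ_eq h (g ^^ n))"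

definition resonant :: "(complex \<Rightarrow> complex) \<Rightarrow> bool" where
  "resonant f \<longleftrightarrow> (\<exists>t\<in>\<rat>. deriv f 0 = exp (2 * pi * \<i> * of_real t))"

definition real_nonresonant :: "(complex \<Rightarrow> complex) \<Rightarrow> bool" where
  "real_nonresonant f \<longleftrightarrow> (\<exists>t::real. t \<notin> \<rat> \<and> deriv f 0 = exp (2 * pi * \<i> * of_real t))"

definition linearizable :: "(complex \<Rightarrow> complex) \<Rightarrow> bool" where
  "linearizable f \<longleftrightarrow> (\<exists>\<phi>. diff0 \<phi> \<and> (\<forall>\<^sub>F z in nhds 0. \<phi> (f z) = deriv f 0 * \<phi> z))"

definition germ_abelian :: "(complex \<Rightarrow> complex) set \<Rightarrow> bool" where
  "germ_abelian H \<longleftrightarrow> (\<forall>g\<in>H. \<forall>h\<in>H. germ_eq (g \<circ> h) (h \<circ> g))"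

definition circle_type :: "(complex \<Rightarrow> complex) set \<Rightarrow> bool" where
  "circle_type H \<longleftrightarrow> germ_abelian H \<and> (\<exists>g\<in>H. real_nonresonant g \<and> linearizable g)"

text \<open>Representatives of generators: pairs (f, U), f defined on the open
  neighbourhood U of 0.\<close>
definition good_reps :: "((complex \<Rightarrow> complex) \<times> complex set) list \<Rightarrow> bool" where
  "good_reps gens \<longleftrightarrow> (\<forall>(f,U)\<in>set gens. open U \<and> 0 \<in> U \<and> f holomorphic_on U \<and> inj_on f U \<and> f 0 = 0)"

inductive_set pseudo_orbit ::
  "((complex \<Rightarrow> complex) \<times> complex set) list \<Rightarrow> complex \<Rightarrow> complex set"
  for gens :: "((complex \<Rightarrow> complex) \<times> complex set) list" and p :: complex where
  base: "p \<in> pseudo_orbit gens p"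
| fwd: "w \<in> pseudo_orbit gens p \<Longrightarrow> (f, U) \<in> set gens \<Longrightarrow> w \<in> U \<Longrightarrow> f w \<in> pseudo_orbit gens p"
| bwd: "w \<in> pseudo_orbit gens p \<Longrightarrow> (f, U) \<in> set gens \<Longrightarrow> w \<in> f ` U \<Longrightarrow>
          inv_into U f w \<in> pseudo_orbit gens p"

definition L_stable :: "((complex \<Rightarrow> complex) \<times> complex set) list \<Rightarrow> bool" where
  "L_stable gens \<longleftrightarrow> (\<forall>U. open U \<and> 0 \<in> U \<longrightarrow>
      (\<exists>V. open V \<and> 0 \<in> V \<and> V \<subseteq> U \<and> (\<forall>p\<in>V. pseudo_orbit gens p \<subseteq> U)))"

definition closed_off_origin :: "complex set \<Rightarrow> bool" where
  "closed_off_origin S \<longleftrightarrow> closure S - {0} \<subseteq> S"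

definition recurrent_orbit :: "((complex \<Rightarrow> complex) \<times> complex set) list \<Rightarrow> complex \<Rightarrow> bool" where
  "recurrent_orbit gens p \<longleftrightarrow> p islimpt pseudo_orbit gens p"

end

theory Submission
  imports Defs "HOL-Complex_Analysis.Complex_Analysis"
begin

text \<open>Every element \<open>g\<close> of the generated group maps each point near the origin into its own
  pseudo-orbit. L-stability therefore keeps all iterates of \<open>g\<close> in a small disc, so Cauchy's
  estimate gives \<open>|g'(0)| \<le> 1\<close>, hence \<open>|g'(0)| = 1\<close> by applying it to \<open>g\<^sup>-\<^sup>1\<close>, and a Montel limit of
  the Cesaro means of \<open>g'(0)\<^sup>-\<^sup>n g\<^sup>n\<close> linearizes \<open>g\<close>. A linearizable germ tangent to the identity is
  the identity, so \<open>g \<mapsto> g'(0)\<close> is an injective homomorphism into the unit circle and the group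
  is abelian. If all generators are resonant, its image is a finite group of roots of unity and
  the group is finite cyclic. Otherwise some generator is an irrational rotation in a
  linearizing chart: near the origin its forward orbits are recurrent and accumulate on whole
  circles, which no countable pseudo-orbit can contain.\<close>

section \<open>Germs of holomorphic diffeomorphisms\<close>

lemma germ_eq_sym: "germ_eq f g \<Longrightarrow> germ_eq g f"
  unfolding germ_eq_def by (auto elim: eventually_mono)

lemma germ_eq_trans: "germ_eq f g \<Longrightarrow> germ_eq g h \<Longrightarrow> germ_eq f h"
  unfolding germ_eq_def by (auto elim: eventually_elim2)

lemma germ_class_eq: "germ_eq h h' \<Longrightarrow> {x. germ_eq x h} = {x. germ_eq x h'}"
  using germ_eq_sym germ_eq_trans by blast

lemma germ_eq_iff_open: "germ_eq f g \<longleftrightarrow> (\<exists>S. open S \<and> 0 \<in> S \<and> (\<forall>z\<in>S. f z = g z))"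
  unfolding germ_eq_def eventually_nhds by auto

lemma germ_eq_comp_left: "germ_eq a b \<Longrightarrow> germ_eq (c \<circ> a) (c \<circ> b)"
  unfolding germ_eq_def by (auto elim: eventually_mono)

lemma diff0_zero: "diff0 g \<Longrightarrow> g 0 = 0"
  unfolding diff0_def by auto

lemma diff0_has_field_derivative: "diff0 g \<Longrightarrow> (g has_field_derivative deriv g 0) (at 0)"
  unfolding diff0_def using holomorphic_derivI by blast

lemma diff0_isCont: "diff0 g \<Longrightarrow> isCont g 0"
  using diff0_has_field_derivative field_differentiable_imp_continuous_at
  unfolding field_differentiable_def by blast

lemma eventually_nhds_0_comp_diff0:
  assumes "diff0 c" "eventually P (nhds 0)"
  shows "\<forall>\<^sub>F z in nhds 0. P (c z)"
proof -
  have "filterlim c (nhds 0) (nhds 0)"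
    using diff0_isCont[OF assms(1)] diff0_zero[OF assms(1)]
    by (metis isCont_def tendsto_at_iff_tendsto_nhds)
  then show ?thesis
    using eventually_compose_filterlim assms(2) by blast
qed

lemma germ_eq_comp_right: "germ_eq a b \<Longrightarrow> diff0 c \<Longrightarrow> germ_eq (a \<circ> c) (b \<circ> c)"
  unfolding germ_eq_def using eventually_nhds_0_comp_diff0 by fastforce

lemma diff0_comp:
  assumes "diff0 g" "diff0 h"
  shows "diff0 (g \<circ> h)"
proof -
  obtain U where U: "open U" "0 \<in> U" "g holomorphic_on U" "inj_on g U" "g 0 = 0"
    using assms(1) diff0_def by blast
  obtain V where V: "open V" "0 \<in> V" "h holomorphic_on V" "inj_on h V" "h 0 = 0"
    using assms(2) diff0_def by blast
  define W where "W = V \<inter> h -` U"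
  have "open W"
    unfolding W_def using V(1,3) U(1) holomorphic_on_imp_continuous_on continuous_open_preimage
    by blast
  moreover have "(g \<circ> h) holomorphic_on W"
    using U(3) V(3) unfolding W_def
    by (intro holomorphic_on_compose_gen[where t=U]) (auto elim: holomorphic_on_subset)
  moreover have "inj_on (g \<circ> h) W"
    using U(4) V(4) unfolding W_def inj_on_def by auto
  ultimately show ?thesis
    unfolding diff0_def W_def using U V by (intro exI[of _ W]) (auto simp: W_def)
qed

lemma diff0_germ_eq:
  assumes "diff0 g" "germ_eq g' g"
  shows "diff0 g'"
proof -
  obtain U where U: "open U" "0 \<in> U" "g holomorphic_on U" "inj_on g U" "g 0 = 0"
    using assms(1) diff0_def by blast
  obtain S where S: "open S" "0 \<in> S" "\<forall>z\<in>S. g' z = g z"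
    using assms(2) germ_eq_iff_open by blast
  have "g holomorphic_on U \<inter> S"
    using U(3) by (rule holomorphic_on_subset) blast
  then have "g' holomorphic_on U \<inter> S"
    by (rule holomorphic_transform) (use S(3) in auto)
  moreover have "inj_on g' (U \<inter> S)"
    using U(4) S(3) unfolding inj_on_def by auto
  ultimately show ?thesis
    unfolding diff0_def using U S by (intro exI[of _ "U \<inter> S"]) auto
qed

lemma diff0_id: "diff0 id"
  unfolding diff0_def by (intro exI[of _ UNIV]) auto

lemma diff0_inverse:
  assumes "diff0 g"
  obtains k where "diff0 k" "germ_eq (g \<circ> k) id" "germ_eq (k \<circ> g) id"
proof -
  obtain U where U: "open U" "0 \<in> U" "g holomorphic_on U" "inj_on g U" "g 0 = 0"
    using assms(1) diff0_def by blast
  obtain k where k: "k holomorphic_on g ` U" "\<And>z. z \<in> U \<Longrightarrow> k (g z) = z"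
    using holomorphic_has_inverse[OF U(3,1,4)] by blast
  have gU: "open (g ` U)" "0 \<in> g ` U"
    using open_mapping_thm3[OF U(3,1,4)] U(2,5) by force+
  have "diff0 k"
    unfolding diff0_def using gU k U(2,5) by (intro exI[of _ "g ` U"]) (force simp: inj_on_def)
  moreover have "germ_eq (g \<circ> k) id" "germ_eq (k \<circ> g) id"
    unfolding germ_eq_iff_open using gU U(1,2) k(2) by force+
  ultimately show ?thesis using that by blast
qed

lemma deriv_comp_diff0:
  assumes "diff0 g" "diff0 h"
  shows "deriv (g \<circ> h) 0 = deriv g 0 * deriv h 0"
  using DERIV_chain[OF _ diff0_has_field_derivative[OF assms(2)]]
    diff0_has_field_derivative[OF assms(1)] diff0_zero[OF assms(2)]
  by (metis DERIV_imp_deriv)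

lemma deriv_germ_eq: "germ_eq a b \<Longrightarrow> deriv a 0 = deriv b 0"
  unfolding germ_eq_def by (rule deriv_cong_ev) auto

lemma deriv_mult_deriv_inverse:
  assumes "diff0 g" "diff0 k" "germ_eq (g \<circ> k) id"
  shows "deriv g 0 * deriv k 0 = 1"
  using deriv_comp_diff0[OF assms(1,2)] deriv_germ_eq[OF assms(3)] by (simp add: id_def)

lemma funpow_zero: "(g :: 'a::zero \<Rightarrow> 'a) 0 = 0 \<Longrightarrow> (g ^^ n) 0 = 0"
  by (induction n) auto

lemma funpow_has_field_derivative:
  assumes "diff0 g"
  shows "((g ^^ n) has_field_derivative deriv g 0 ^ n) (at 0)"
proof (induction n)
  case (Suc n)
  have "(g has_field_derivative deriv g 0) (at ((g ^^ n) 0))"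
    using diff0_has_field_derivative[OF assms] funpow_zero[of g n, OF diff0_zero[OF assms]] by simp
  from DERIV_chain[OF this Suc] show ?case
    unfolding funpow.simps(2) power_Suc .
qed (simp add: id_def)

lemma deriv_funpow: "diff0 g \<Longrightarrow> deriv (g ^^ n) 0 = deriv g 0 ^ n"
  by (rule DERIV_imp_deriv[OF funpow_has_field_derivative])

lemma germ_inverse_unique:
  assumes "diff0 k1" "diff0 k2" "germ_eq (k1 \<circ> g) id" "germ_eq (g \<circ> k2) id"
  shows "germ_eq k1 k2"
proof -
  have "germ_eq (k1 \<circ> g \<circ> k2) k2"
    using germ_eq_comp_right[OF assms(3,2)] by simp
  moreover have "germ_eq (k1 \<circ> g \<circ> k2) k1"
    using germ_eq_comp_left[OF assms(4), of k1] by (simp add: o_assoc)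
  ultimately show ?thesis using germ_eq_sym germ_eq_trans by blast
qed

lemma germ_subgroup_diff0: "germ_subgroup H \<Longrightarrow> g \<in> H \<Longrightarrow> diff0 g"
  unfolding germ_subgroup_def by auto

lemma germ_subgroup_germ_eq: "germ_subgroup H \<Longrightarrow> g \<in> H \<Longrightarrow> germ_eq g' g \<Longrightarrow> g' \<in> H"
  unfolding germ_subgroup_def by auto

lemma germ_subgroup_id: "germ_subgroup H \<Longrightarrow> id \<in> H"
  unfolding germ_subgroup_def by auto

lemma germ_subgroup_comp: "germ_subgroup H \<Longrightarrow> g \<in> H \<Longrightarrow> h \<in> H \<Longrightarrow> g \<circ> h \<in> H"
  unfolding germ_subgroup_def by auto

lemma germ_subgroup_inverse:
  "germ_subgroup H \<Longrightarrow> g \<in> H \<Longrightarrow> \<exists>k\<in>H. germ_eq (g \<circ> k) id \<and> germ_eq (k \<circ> g) id"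
  unfolding germ_subgroup_def by auto

lemma germ_subgroup_funpow: "germ_subgroup H \<Longrightarrow> g \<in> H \<Longrightarrow> g ^^ n \<in> H"
  by (induction n) (auto intro: germ_subgroup_id germ_subgroup_comp)

lemma gen_by_subset: "F \<subseteq> gen_by F"
  unfolding gen_by_def by auto

lemma gen_by_least: "germ_subgroup H \<Longrightarrow> F \<subseteq> H \<Longrightarrow> gen_by F \<subseteq> H"
  unfolding gen_by_def by auto

text \<open>Inverses are unique up to germ equality and subgroups are closed under it, so an inverse
  taken in one subgroup containing \<open>F\<close> lies in all of them.\<close>

lemma germ_subgroup_gen_by:
  assumes H0: "germ_subgroup H0" "F \<subseteq> H0"
  shows "germ_subgroup (gen_by F)"
  unfolding germ_subgroup_def
proof (intro conjI ballI allI impI)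
  fix g assume g: "g \<in> gen_by F"
  then show "diff0 g"
    using gen_by_least[OF H0] germ_subgroup_diff0[OF H0(1)] by blast
  obtain k where k: "k \<in> H0" "germ_eq (g \<circ> k) id" "germ_eq (k \<circ> g) id"
    using germ_subgroup_inverse[OF H0(1)] g gen_by_least[OF H0] by blast
  have "k \<in> H" if H: "germ_subgroup H" "F \<subseteq> H" for H
  proof -
    obtain k' where k': "k' \<in> H" "germ_eq (g \<circ> k') id"
      using germ_subgroup_inverse[OF H(1)] g gen_by_least[OF H] by blast
    have "germ_eq k k'"
      using germ_inverse_unique[OF _ _ k(3) k'(2)] k(1) k'(1) H0(1) H(1)
      by (blast intro: germ_subgroup_diff0)
    then show ?thesis using germ_subgroup_germ_eq[OF H(1) k'(1)] by blast
  qed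
  then show "\<exists>k\<in>gen_by F. germ_eq (g \<circ> k) id \<and> germ_eq (k \<circ> g) id"
    using k(2,3) unfolding gen_by_def by blast
qed (auto simp: gen_by_def intro: germ_subgroup_germ_eq germ_subgroup_id germ_subgroup_comp)

section \<open>Pseudo-orbits\<close>

lemma pseudo_orbit_trans:
  assumes "q \<in> pseudo_orbit gens p" "x \<in> pseudo_orbit gens q"
  shows "x \<in> pseudo_orbit gens p"
  using assms(2) by induction (auto intro: assms(1) pseudo_orbit.intros)

lemma pseudo_orbit_step: "(f, U) \<in> set gens \<Longrightarrow> w \<in> U \<Longrightarrow> f w \<in> pseudo_orbit gens w"
  by (rule pseudo_orbit.fwd[OF pseudo_orbit.base])

lemma pseudo_orbit_sym:
  assumes "good_reps gens" "q \<in> pseudo_orbit gens p"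
  shows "p \<in> pseudo_orbit gens q"
  using assms(2)
proof induction
  case (fwd w f U)
  have "inj_on f U" using assms(1) fwd(2) unfolding good_reps_def by auto
  then have "w \<in> pseudo_orbit gens (f w)"
    using pseudo_orbit.bwd[OF pseudo_orbit.base fwd(2), of "f w"] fwd(3) by simp
  then show ?case using pseudo_orbit_trans fwd(4) by blast
next
  case (bwd w f U)
  have "w \<in> pseudo_orbit gens (inv_into U f w)"
    using pseudo_orbit_step[OF bwd(2) inv_into_into[OF bwd(3)]] f_inv_into_f[OF bwd(3)] by simp
  then show ?case using pseudo_orbit_trans bwd(4) by blast
qed (rule pseudo_orbit.base)

text \<open>Every point of a pseudo-orbit is the image of the base point under a finite word in the
  generators and their inverses.\<close>

lemma countable_pseudo_orbit: "countable (pseudo_orbit gens p)"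
proof -
  define M where "M = fst ` set gens \<union> (\<lambda>(f, U). inv_into U f) ` set gens"
  have "pseudo_orbit gens p \<subseteq> (\<lambda>hs. foldr (\<lambda>h. h) hs p) ` lists M"
  proof
    fix x assume "x \<in> pseudo_orbit gens p"
    then show "x \<in> (\<lambda>hs. foldr (\<lambda>h. h) hs p) ` lists M"
    proof induction
      case base
      show ?case by (rule image_eqI[of _ _ "[]"]) auto
    next
      case (fwd w f U)
      then obtain hs where "hs \<in> lists M" "w = foldr (\<lambda>h. h) hs p" by blast
      moreover have "f \<in> M" using fwd(2) unfolding M_def by force
      ultimately show ?case by (intro image_eqI[of _ _ "f # hs"]) auto
    next
      case (bwd w f U)
      then obtain hs where "hs \<in> lists M" "w = foldr (\<lambda>h. h) hs p" by blast
      moreover have "inv_into U f \<in> M" using bwd(2) unfolding M_def by force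
      ultimately show ?case by (intro image_eqI[of _ _ "inv_into U f # hs"]) auto
    qed
  qed
  moreover have "countable (lists M)"
    unfolding M_def by (intro countable_lists countable_finite) auto
  ultimately show ?thesis by (blast intro: countable_subset)
qed

lemma closed_imp_closed_off_origin: "closed S \<Longrightarrow> closed_off_origin S"
  unfolding closed_off_origin_def by (simp add: closure_closed)

lemma not_closed_off_origin_if_uncountable_closure:
  assumes "S \<subseteq> pseudo_orbit gens p" "uncountable (closure S)"
  shows "\<not> closed_off_origin (pseudo_orbit gens p)"
proof
  assume "closed_off_origin (pseudo_orbit gens p)"
  then have "closure S - {0} \<subseteq> pseudo_orbit gens p"
    using closure_mono[OF assms(1)] unfolding closed_off_origin_def by blast
  then have "countable (closure S - {0})"
    using countable_pseudo_orbit by (rule countable_subset)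
  then show False
    using assms(2) by simp
qed

text \<open>The generated group consists of such germs; this is how L-stability reaches its elements.\<close>

definition tracks_pseudo_orbits :: "((complex \<Rightarrow> complex) \<times> complex set) list \<Rightarrow> (complex \<Rightarrow> complex) \<Rightarrow> bool" where
  "tracks_pseudo_orbits gens g \<longleftrightarrow> diff0 g \<and> (\<forall>\<^sub>F z in nhds 0. g z \<in> pseudo_orbit gens z)"

lemma generators_track_pseudo_orbits:
  assumes "good_reps gens" "f \<in> fst ` set gens"
  shows "tracks_pseudo_orbits gens f"
proof -
  obtain U where fU: "(f, U) \<in> set gens" using assms(2) by force
  then have U: "open U" "0 \<in> U" "f holomorphic_on U" "inj_on f U" "f 0 = 0"
    using assms(1) unfolding good_reps_def by auto
  have "\<forall>\<^sub>F z in nhds 0. z \<in> U" by (rule eventually_nhds_in_open[OF U(1,2)])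
  then show ?thesis
    unfolding tracks_pseudo_orbits_def diff0_def using U pseudo_orbit_step[OF fU]
    by (auto elim: eventually_mono)
qed

lemma germ_subgroup_tracks_pseudo_orbits:
  assumes reps: "good_reps gens"
  shows "germ_subgroup {g. tracks_pseudo_orbits gens g}"
  unfolding germ_subgroup_def Ball_def mem_Collect_eq
proof (intro conjI allI impI)
  fix g g' assume g: "tracks_pseudo_orbits gens g" and g': "germ_eq g' g"
  have "\<forall>\<^sub>F z in nhds 0. g z \<in> pseudo_orbit gens z" "\<forall>\<^sub>F z in nhds 0. g' z = g z"
    using g g' unfolding tracks_pseudo_orbits_def germ_eq_def by auto
  then have "\<forall>\<^sub>F z in nhds 0. g' z \<in> pseudo_orbit gens z"
    by eventually_elim simp
  then show "tracks_pseudo_orbits gens g'"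
    using diff0_germ_eq g g' unfolding tracks_pseudo_orbits_def by blast
next
  fix g h assume g: "tracks_pseudo_orbits gens g" and h: "tracks_pseudo_orbits gens h"
  then have "\<forall>\<^sub>F z in nhds 0. g (h z) \<in> pseudo_orbit gens (h z)"
    unfolding tracks_pseudo_orbits_def using eventually_nhds_0_comp_diff0 by blast
  moreover have "\<forall>\<^sub>F z in nhds 0. h z \<in> pseudo_orbit gens z"
    using h unfolding tracks_pseudo_orbits_def by blast
  ultimately have "\<forall>\<^sub>F z in nhds 0. g (h z) \<in> pseudo_orbit gens z"
    by eventually_elim (blast intro: pseudo_orbit_trans)
  then show "tracks_pseudo_orbits gens (g \<circ> h)"
    using g h diff0_comp unfolding tracks_pseudo_orbits_def by auto
next
  fix g assume g: "tracks_pseudo_orbits gens g"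
  obtain k where k: "diff0 k" "germ_eq (g \<circ> k) id" "germ_eq (k \<circ> g) id"
    using diff0_inverse g unfolding tracks_pseudo_orbits_def by blast
  have "\<forall>\<^sub>F z in nhds 0. g (k z) \<in> pseudo_orbit gens (k z)"
    using g k(1) unfolding tracks_pseudo_orbits_def using eventually_nhds_0_comp_diff0 by blast
  then have "\<forall>\<^sub>F z in nhds 0. k z \<in> pseudo_orbit gens z"
    using k(2) unfolding germ_eq_def by eventually_elim (auto intro: pseudo_orbit_sym[OF reps])
  then show "\<exists>k\<in>{g. tracks_pseudo_orbits gens g}. germ_eq (g \<circ> k) id \<and> germ_eq (k \<circ> g) id"
    using k unfolding tracks_pseudo_orbits_def by auto
next
  show "tracks_pseudo_orbits gens id"
    unfolding tracks_pseudo_orbits_def by (simp add: diff0_id pseudo_orbit.base)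
qed (simp add: tracks_pseudo_orbits_def)

section \<open>Linearization of germs with bounded iterates\<close>

lemma funpow_conjugate_linear:
  fixes \<phi> :: "'a \<Rightarrow> 'b::monoid_mult"
  assumes "\<And>n. (f ^^ n) p \<in> S" "\<And>z. z \<in> S \<Longrightarrow> \<phi> (f z) = c * \<phi> z"
  shows "\<phi> ((f ^^ n) p) = c ^ n * \<phi> p"
proof (induction n)
  case (Suc n)
  have "\<phi> (f ((f ^^ n) p)) = c * \<phi> ((f ^^ n) p)"
    by (rule assms(2)[OF assms(1)])
  then show ?case
    using Suc by (simp add: mult.assoc)
qed simp

lemma funpow_holomorphic_on:
  assumes "g holomorphic_on U" "\<And>n z. z \<in> V \<Longrightarrow> (g ^^ n) z \<in> U"
  shows "(g ^^ n) holomorphic_on V"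
proof (induction n)
  case (Suc n)
  have "(g \<circ> g ^^ n) holomorphic_on V"
    using Suc assms by (intro holomorphic_on_compose_gen[where t=U]) auto
  then show ?case unfolding funpow.simps(2) .
qed (simp add: id_def)

lemma L_stable_iterates:
  assumes stable: "L_stable gens" and g: "tracks_pseudo_orbits gens g" and "r > 0"
  obtains V where "open V" "0 \<in> V" "V \<subseteq> ball 0 r"
    "\<And>n z. z \<in> V \<Longrightarrow> (g ^^ n) z \<in> pseudo_orbit gens z"
    "\<And>n z. z \<in> V \<Longrightarrow> (g ^^ n) z \<in> ball 0 r"
    "\<And>n. (g ^^ n) holomorphic_on V"
proof -
  obtain U where U: "open U" "0 \<in> U" "g holomorphic_on U"
    using g unfolding tracks_pseudo_orbits_def diff0_def by blast
  have "\<forall>\<^sub>F z in nhds 0. z \<in> U \<and> g z \<in> pseudo_orbit gens z"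
    using eventually_nhds_in_open[OF U(1,2)] g unfolding tracks_pseudo_orbits_def
    by (auto elim: eventually_conj)
  then obtain d where d: "d > 0" "\<And>z. dist z 0 < d \<Longrightarrow> z \<in> U \<and> g z \<in> pseudo_orbit gens z"
    unfolding eventually_nhds_metric by blast
  define s where "s = min d r"
  have s: "s > 0" "ball 0 s \<subseteq> ball 0 r" "\<And>z. z \<in> ball 0 s \<Longrightarrow> z \<in> U \<and> g z \<in> pseudo_orbit gens z"
    using d \<open>r > 0\<close> unfolding s_def by (auto simp: dist_commute)
  obtain V where V: "open V" "0 \<in> V" "V \<subseteq> ball 0 s" "\<forall>p\<in>V. pseudo_orbit gens p \<subseteq> ball 0 s"
    using stable s(1) unfolding L_stable_def by (metis centre_in_ball open_ball)
  have orbit: "(g ^^ n) z \<in> pseudo_orbit gens z" if "z \<in> V" for n z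
  proof (induction n)
    case (Suc n)
    then have "g ((g ^^ n) z) \<in> pseudo_orbit gens ((g ^^ n) z)"
      using s(3) V(4) that by blast
    then show ?case using pseudo_orbit_trans[OF Suc] by simp
  qed (simp add: pseudo_orbit.base)
  then have ball: "(g ^^ n) z \<in> ball 0 s" if "z \<in> V" for n z
    using V(4) that by blast
  show ?thesis
  proof
    show "(g ^^ n) holomorphic_on V" for n
      using funpow_holomorphic_on[OF U(3)] ball s(3) by blast
    show "V \<subseteq> ball 0 r" using V(3) s(2) by blast
    show "(g ^^ n) z \<in> ball 0 r" if "z \<in> V" for n z using ball[OF that] s(2) by blast
  qed (use V orbit in auto)
qed

lemma norm_deriv_le_1_if_bounded_iterates:
  assumes g: "diff0 g" and V: "open V" "0 \<in> V"
    and hol: "\<And>n. (g ^^ n) holomorphic_on V" and bnd: "\<And>n z. z \<in> V \<Longrightarrow> norm ((g ^^ n) z) \<le> R"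
  shows "norm (deriv g 0) \<le> 1"
proof -
  obtain e where e: "e > 0" "cball 0 e \<subseteq> V"
    using V open_contains_cball_eq by blast
  have bound: "norm (deriv g 0) ^ n \<le> R / e" for n
  proof -
    have "norm ((deriv ^^ 1) (g ^^ n) 0) \<le> fact 1 * R / e ^ 1"
    proof (rule Cauchy_inequality)
      show "(g ^^ n) holomorphic_on ball 0 e"
        using hol e(2) ball_subset_cball by (blast intro: holomorphic_on_subset)
      show "continuous_on (cball 0 e) (g ^^ n)"
        using hol e(2) by (blast intro: holomorphic_on_imp_continuous_on holomorphic_on_subset)
      show "norm ((g ^^ n) x) \<le> R" if "norm (0 - x) = e" for x
      proof -
        have "x \<in> cball 0 e" using that by (simp add: dist_norm)
        then show ?thesis using e(2) bnd by blast
      qed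
    qed (rule e(1))
    moreover have "deriv (g ^^ n) 0 = deriv g 0 ^ n"
      using g by (rule deriv_funpow)
    ultimately show ?thesis by (simp add: norm_power)
  qed
  show ?thesis
  proof (rule ccontr)
    assume "\<not> norm (deriv g 0) \<le> 1"
    then obtain n where "R / e < norm (deriv g 0) ^ n"
      using real_arch_pow by (metis not_le)
    with bound show False by (meson not_le)
  qed
qed

lemma has_field_derivative_uniform_limit_const:
  fixes f :: "nat \<Rightarrow> complex \<Rightarrow> complex"
  assumes "open V" "e > 0" "cball z e \<subseteq> V"
    and hol: "\<And>n. f n holomorphic_on V" and der: "\<And>n. (f n has_field_derivative c) (at z)"
    and lim: "uniform_limit (cball z e) f \<phi> sequentially"
  shows "(\<phi> has_field_derivative c) (at z)"
proof -
  obtain \<phi>' where \<phi>': "\<And>w. w \<in> ball z e \<Longrightarrow> (\<phi> has_field_derivative \<phi>' w) (at w) \<and>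
      ((\<lambda>n. deriv (f n) w) \<longlongrightarrow> \<phi>' w) sequentially"
  proof (rule has_complex_derivative_uniform_limit[OF _ lim _ \<open>e > 0\<close>])
    have "continuous_on (cball z e) (f n)" for n
      using hol assms(3) by (blast intro: holomorphic_on_imp_continuous_on holomorphic_on_subset)
    moreover have "(f n has_field_derivative deriv (f n) w) (at w)" if "w \<in> ball z e" for n w
      using holomorphic_derivI[OF hol assms(1)] that assms(3) ball_subset_cball by blast
    ultimately show "\<forall>\<^sub>F n in sequentially. continuous_on (cball z e) (f n) \<and>
        (\<forall>w\<in>ball z e. (f n has_field_derivative deriv (f n) w) (at w))"
      by simp
  qed auto
  have "deriv (f n) z = c" for n
    using der by (rule DERIV_imp_deriv)
  moreover have "((\<lambda>n. deriv (f n) z) \<longlongrightarrow> \<phi>' z) sequentially"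
    using \<phi>' \<open>e > 0\<close> by simp
  ultimately have "\<phi>' z = c"
    by (simp add: LIMSEQ_const_iff)
  then show ?thesis using \<phi>' \<open>e > 0\<close> by force
qed

text \<open>The linearizing chart is obtained as a limit of the Cesaro means of
  \<open>\<lambda>\<^sup>-\<^sup>j g\<^sup>j\<close>, where \<open>\<lambda> = g'(0)\<close>.\<close>

definition cesaro_mean :: "(complex \<Rightarrow> complex) \<Rightarrow> nat \<Rightarrow> complex \<Rightarrow> complex" where
  "cesaro_mean g n z = (\<Sum>j<Suc n. (g ^^ j) z / deriv g 0 ^ j) / of_nat (Suc n)"

lemma cesaro_mean_zero: "g 0 = 0 \<Longrightarrow> cesaro_mean g n 0 = 0"
  unfolding cesaro_mean_def using funpow_zero[of g] by simp

context
  fixes g :: "complex \<Rightarrow> complex" and V :: "complex set" and R :: real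
  assumes g: "diff0 g" and unimodular: "norm (deriv g 0) = 1"
    and V: "open V" "0 \<in> V"
    and hol: "\<And>n. (g ^^ n) holomorphic_on V"
    and bnd: "\<And>n z. z \<in> V \<Longrightarrow> norm ((g ^^ n) z) \<le> R"
begin

lemma deriv_nonzero: "deriv g 0 \<noteq> 0"
  using unimodular by auto

lemma cesaro_mean_holomorphic_on: "cesaro_mean g n holomorphic_on V"
  unfolding cesaro_mean_def[abs_def] using deriv_nonzero
  by (intro holomorphic_intros hol) (auto simp del: of_nat_Suc)

lemma norm_cesaro_mean_le:
  assumes "z \<in> V"
  shows "norm (cesaro_mean g n z) \<le> R"
proof -
  have "norm (\<Sum>j<Suc n. (g ^^ j) z / deriv g 0 ^ j) \<le> (\<Sum>j<Suc n. R)"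
    using bnd[OF assms] unimodular
    by (intro sum_norm_le) (simp add: norm_divide norm_power)
  then show ?thesis
    unfolding cesaro_mean_def norm_divide norm_of_nat
    by (simp add: divide_le_eq mult.commute del: of_nat_Suc sum.lessThan_Suc)
qed

lemma cesaro_mean_has_field_derivative: "(cesaro_mean g n has_field_derivative 1) (at 0)"
proof -
  have "((\<lambda>z. (\<Sum>j<Suc n. (g ^^ j) z / deriv g 0 ^ j) / of_nat (Suc n)) has_field_derivative
      (\<Sum>j<Suc n. deriv g 0 ^ j / deriv g 0 ^ j) / of_nat (Suc n)) (at 0)"
    by (intro DERIV_cdivide DERIV_sum funpow_has_field_derivative[OF g])
  moreover have "(\<Sum>j<Suc n. deriv g 0 ^ j / deriv g 0 ^ j) / of_nat (Suc n) = (1 :: complex)"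
    using deriv_nonzero by (simp del: of_nat_Suc)
  ultimately show ?thesis unfolding cesaro_mean_def[abs_def] by simp
qed

text \<open>The means telescope under \<open>g\<close>, so they satisfy the linearization equation up to an error \<open>O(1/n)\<close>.\<close>

lemma norm_cesaro_mean_defect:
  assumes z: "z \<in> V"
  shows "norm (cesaro_mean g n (g z) - deriv g 0 * cesaro_mean g n z) \<le> 2 * R / real (Suc n)"
proof -
  define a where "a j = (g ^^ j) z / deriv g 0 ^ j" for j
  have "(\<Sum>j<Suc n. (g ^^ j) (g z) / deriv g 0 ^ j) = deriv g 0 * (\<Sum>j<Suc n. a (Suc j))"
    unfolding sum_distrib_left a_def
    by (intro sum.cong refl) (simp add: funpow_swap1 deriv_nonzero)
  then have "cesaro_mean g n (g z) - deriv g 0 * cesaro_mean g n z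
      = deriv g 0 * ((\<Sum>j<Suc n. a (Suc j)) - (\<Sum>j<Suc n. a j)) / of_nat (Suc n)"
    unfolding cesaro_mean_def a_def
    by (simp only: times_divide_eq_right right_diff_distrib diff_divide_distrib)
  also have "(\<Sum>j<Suc n. a (Suc j)) - (\<Sum>j<Suc n. a j) = a (Suc n) - a 0"
    by (simp only: sum_subtractf[symmetric] sum_lessThan_telescope)
  finally have "norm (cesaro_mean g n (g z) - deriv g 0 * cesaro_mean g n z)
      = norm (a (Suc n) - a 0) / real (Suc n)"
    by (simp add: norm_divide norm_mult unimodular del: of_nat_Suc)
  moreover have "norm (a j) \<le> R" for j
    unfolding a_def using bnd[OF z] unimodular by (simp add: norm_divide norm_power)
  then have "norm (a (Suc n) - a 0) \<le> 2 * R"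
    using norm_triangle_ineq4[of "a (Suc n)" "a 0"] by (smt (verit))
  ultimately show ?thesis
    by (simp add: divide_right_mono del: of_nat_Suc)
qed

lemma cesaro_mean_limit_linearizes:
  assumes r: "strict_mono r" and lim: "\<And>z. z \<in> V \<Longrightarrow> (\<lambda>n. cesaro_mean g (r n) z) \<longlonglongrightarrow> \<phi> z"
    and z: "z \<in> V" "g z \<in> V"
  shows "\<phi> (g z) = deriv g 0 * \<phi> z"
proof -
  have "(\<lambda>n. inverse (real (Suc (r n)))) \<longlonglongrightarrow> 0"
    using LIMSEQ_subseq_LIMSEQ[OF LIMSEQ_inverse_real_of_nat r] by (simp add: o_def)
  then have "(\<lambda>n. 2 * R / real (Suc (r n))) \<longlonglongrightarrow> 0"
    unfolding divide_inverse by (rule tendsto_mult_right_zero)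
  then have "(\<lambda>n. cesaro_mean g (r n) (g z) - deriv g 0 * cesaro_mean g (r n) z) \<longlonglongrightarrow> 0"
    by (rule Lim_null_comparison[rotated])
      (intro always_eventually allI norm_cesaro_mean_defect z(1))
  moreover have "(\<lambda>n. cesaro_mean g (r n) (g z) - deriv g 0 * cesaro_mean g (r n) z)
      \<longlonglongrightarrow> \<phi> (g z) - deriv g 0 * \<phi> z"
    using lim[OF z(2)] lim[OF z(1)] by (intro tendsto_diff tendsto_mult_left)
  ultimately have "\<phi> (g z) - deriv g 0 * \<phi> z = 0"
    by (rule LIMSEQ_unique[rotated])
  then show ?thesis by simp
qed

lemma cesaro_mean_limit_deriv:
  assumes lim: "\<And>K. compact K \<Longrightarrow> K \<subseteq> V \<Longrightarrow> uniform_limit K (cesaro_mean g \<circ> r) \<phi> sequentially"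
  shows "deriv \<phi> 0 = 1"
proof -
  obtain e where e: "e > 0" "cball 0 e \<subseteq> V"
    using V open_contains_cball_eq by blast
  have "(\<phi> has_field_derivative 1) (at 0)"
  proof (rule has_field_derivative_uniform_limit_const[OF V(1) e, where f = "cesaro_mean g \<circ> r"])
    show "(cesaro_mean g \<circ> r) n holomorphic_on V" for n
      unfolding comp_apply by (rule cesaro_mean_holomorphic_on)
    show "((cesaro_mean g \<circ> r) n has_field_derivative 1) (at 0)" for n
      unfolding comp_apply by (rule cesaro_mean_has_field_derivative)
    show "uniform_limit (cball 0 e) (cesaro_mean g \<circ> r) \<phi> sequentially"
      by (rule lim[OF compact_cball e(2)])
  qed
  then show ?thesis by (rule DERIV_imp_deriv)
qed

lemma linearization_of_bounded_iterates:
  obtains \<phi> where "\<phi> holomorphic_on V" "\<phi> 0 = 0" "deriv \<phi> 0 = 1"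
    "\<And>z. z \<in> V \<Longrightarrow> g z \<in> V \<Longrightarrow> \<phi> (g z) = deriv g 0 * \<phi> z"
proof -
  let ?H = "{h. h holomorphic_on V \<and> (\<forall>z\<in>V. norm (h z) \<le> R)}"
  obtain \<phi> r where \<phi>: "\<phi> holomorphic_on V" "strict_mono (r :: nat \<Rightarrow> nat)"
      "\<And>z. z \<in> V \<Longrightarrow> (\<lambda>n. cesaro_mean g (r n) z) \<longlonglongrightarrow> \<phi> z"
      "\<And>K. compact K \<Longrightarrow> K \<subseteq> V \<Longrightarrow> uniform_limit K (cesaro_mean g \<circ> r) \<phi> sequentially"
  proof (rule Montel[OF V(1), of ?H "cesaro_mean g"])
    show "\<exists>B. \<forall>h\<in>?H. \<forall>z\<in>K. norm (h z) \<le> B" if "K \<subseteq> V" for K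
      using that by blast
    show "range (cesaro_mean g) \<subseteq> ?H"
      using cesaro_mean_holomorphic_on norm_cesaro_mean_le by blast
  qed auto
  have "(\<lambda>n. cesaro_mean g (r n) 0) \<longlonglongrightarrow> 0"
    by (simp add: cesaro_mean_zero[of g, OF diff0_zero[OF g]])
  then have "\<phi> 0 = 0"
    using \<phi>(3)[OF V(2)] LIMSEQ_unique by blast
  then show ?thesis
    using that[OF \<phi>(1)] cesaro_mean_limit_deriv[OF \<phi>(4)] cesaro_mean_limit_linearizes[OF \<phi>(2,3)]
    by blast
qed

end

section \<open>Irrational rotations\<close>

lemma cis_2pi_power_ne_1:
  assumes "t \<notin> \<rat>" "n > 0"
  shows "cis (2 * pi * t) ^ n \<noteq> 1"
proof
  assume "cis (2 * pi * t) ^ n = 1"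
  then have "cis (real n * (2 * pi * t)) = 1"
    by (simp only: Complex.DeMoivre)
  then have "exp (\<i> * complex_of_real (real n * (2 * pi * t))) = 1"
    by (simp only: cis_conv_exp)
  then obtain m :: int where "real n * (2 * pi * t) = of_int (2 * m) * pi"
    using exp_eq_1 by force
  then have "t = of_int m / real n"
    using assms(2) by (simp add: field_simps)
  then show False
    using assms(1) by simp
qed

lemma cis_2pi_frac: "cis (2 * pi * frac x) = cis (2 * pi * x)"
proof -
  have "cis (2 * pi * x) = cis (2 * pi * frac x) * cis (2 * pi * of_int \<lfloor>x\<rfloor>)"
    unfolding cis_mult frac_def by (simp add: algebra_simps)
  then show ?thesis by simp
qed

lemma unimodular_in_closure_cis_2pi_powers:
  assumes t: "t \<notin> \<rat>" and u: "norm u = 1"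
  shows "u \<in> closure {cis (2 * pi * t) ^ n | n. n > 0}"
  unfolding closure_approachable
proof (intro allI impI)
  fix e :: real assume "e > 0"
  define \<alpha> where "\<alpha> = frac (Arg u / (2 * pi))"
  have "isCont (\<lambda>x. cis (2 * pi * x)) \<alpha>"
    unfolding cis_conv_exp by (intro continuous_intros)
  moreover have "cis (2 * pi * \<alpha>) = u"
  proof -
    have "u \<noteq> 0" using u by auto
    then show ?thesis
      using u cis_Arg[of u] unfolding \<alpha>_def cis_2pi_frac by (simp add: sgn_eq)
  qed
  ultimately obtain d where d: "d > 0" "\<And>x. dist x \<alpha> < d \<Longrightarrow> dist (cis (2 * pi * x)) u < e"
    using \<open>e > 0\<close> unfolding continuous_at_eps_delta by metis
  obtain k where k: "k > 0" "\<bar>frac (real k * t) - \<alpha>\<bar> < d"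
    using Kronecker_approx_1_explicit[OF t _ _ d(1), of \<alpha>] frac_ge_0 frac_lt_1 \<alpha>_def
    by (metis less_imp_le)
  have "cis (2 * pi * t) ^ k = cis (2 * pi * frac (real k * t))"
    unfolding Complex.DeMoivre cis_2pi_frac by (simp add: mult_ac)
  then have "dist (cis (2 * pi * t) ^ k) u < e"
    using d(2) k(2) by (simp add: dist_real_def)
  then show "\<exists>y\<in>{cis (2 * pi * t) ^ n | n. n > 0}. dist y u < e"
    using k(1) by blast
qed

lemma sphere_subset_closure_rotation_orbit:
  assumes t: "t \<notin> \<rat>" and a: "a \<noteq> 0"
  shows "sphere 0 (norm a) \<subseteq> closure {cis (2 * pi * t) ^ n * a | n. n > 0}"
proof
  fix w :: complex assume w: "w \<in> sphere 0 (norm a)"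
  let ?R = "{cis (2 * pi * t) ^ n | n. n > 0}"
  have "(\<lambda>u. u * a) ` closure ?R \<subseteq> closure ((\<lambda>u. u * a) ` ?R)"
    by (intro image_closure_subset continuous_intros closure_subset image_mono) auto
  moreover have "w / a \<in> closure ?R"
    using unimodular_in_closure_cis_2pi_powers[OF t] w a by (simp add: norm_divide)
  moreover have "(\<lambda>u. u * a) ` ?R = {cis (2 * pi * t) ^ n * a | n. n > 0}"
    by auto
  ultimately show "w \<in> closure {cis (2 * pi * t) ^ n * a | n. n > 0}"
    using a by force
qed

lemma uncountable_sphere:
  fixes a :: complex
  assumes "r > 0"
  shows "uncountable (sphere a r)"
proof -
  have "connected (sphere a r)" "a + of_real r \<in> sphere a r" "a - of_real r \<in> sphere a r"
    using assms by (auto simp: dist_norm intro: connected_sphere)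
  moreover have "a + of_real r \<noteq> a - of_real r"
    using assms by simp
  ultimately show ?thesis
    by (rule connected_uncountable)
qed

lemma closure_image_subset_image_closure:
  fixes f :: "'a::t2_space \<Rightarrow> 'b::t2_space"
  assumes "compact K" "continuous_on K f" "closure S \<subseteq> K"
  shows "closure (f ` S) \<subseteq> f ` closure S"
proof (rule closure_minimal)
  show "f ` S \<subseteq> f ` closure S"
    using closure_subset by blast
  have "compact (closure S)"
    using compact_Int_closed[OF assms(1) closed_closure, of S] assms(3) by (simp add: Int_absorb1)
  moreover have "continuous_on (closure S) f"
    using assms(2,3) by (rule continuous_on_subset)
  ultimately show "closed (f ` closure S)"
    by (intro compact_imp_closed compact_continuous_image)
qed

lemma rotation_orbit_closure:
  fixes \<phi> :: "complex \<Rightarrow> complex" and x :: "nat \<Rightarrow> complex"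
  assumes K: "compact K" "continuous_on K \<phi>" and xK: "range x \<subseteq> K"
    and rot: "\<And>n. \<phi> (x n) = cis (2 * pi * t) ^ n * a"
    and t: "t \<notin> \<rat>" and a: "a \<noteq> 0"
  shows "closure (x ` {0<..}) \<subseteq> K" "sphere 0 (norm a) \<subseteq> \<phi> ` closure (x ` {0<..})"
proof -
  have "closed K"
    using K(1) by (rule compact_imp_closed)
  then show clS: "closure (x ` {0<..}) \<subseteq> K"
    by (rule closure_minimal[rotated]) (use xK in auto)
  have "\<phi> ` x ` {0<..} = {cis (2 * pi * t) ^ n * a | n. n > 0}"
    unfolding image_image rot by auto
  then have "sphere 0 (norm a) \<subseteq> closure (\<phi> ` x ` {0<..})"
    using sphere_subset_closure_rotation_orbit[OF t a] by simp
  also have "\<dots> \<subseteq> \<phi> ` closure (x ` {0<..})"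
    by (rule closure_image_subset_image_closure[OF K clS])
  finally show "sphere 0 (norm a) \<subseteq> \<phi> ` closure (x ` {0<..})" .
qed

text \<open>The chart is injective on \<open>K\<close>, so the point \<open>x 0\<close>, whose image lies on the circle
  \<open>|w| = |a|\<close>, is a limit of the \<open>x n\<close> with \<open>n > 0\<close>, none of which equals it.\<close>

lemma rotation_orbit_islimpt:
  fixes \<phi> :: "complex \<Rightarrow> complex" and x :: "nat \<Rightarrow> complex"
  assumes K: "compact K" "continuous_on K \<phi>" "inj_on \<phi> K" and xK: "range x \<subseteq> K"
    and rot: "\<And>n. \<phi> (x n) = cis (2 * pi * t) ^ n * a"
    and t: "t \<notin> \<rat>" and a: "a \<noteq> 0"
  shows "x 0 islimpt range x"
proof -
  note closure = rotation_orbit_closure[OF K(1,2) xK rot t a]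
  have "\<phi> (x 0) \<in> sphere 0 (norm a)"
    using rot[of 0] by simp
  then obtain y where y: "y \<in> closure (x ` {0<..})" "\<phi> y = \<phi> (x 0)"
    using closure(2) by (metis imageE subsetD)
  then have "y = x 0"
    using inj_onD[OF K(3)] closure(1) xK by blast
  with y have "x 0 \<in> closure (x ` {0<..})"
    by simp
  moreover have "x 0 \<notin> x ` {0<..}"
  proof
    assume "x 0 \<in> x ` {0<..}"
    then obtain n where n: "n > 0" "x n = x 0"
      by auto
    then have "cis (2 * pi * t) ^ n * a = 1 * a"
      using rot[of n] rot[of 0] by simp
    then show False
      using cis_2pi_power_ne_1[OF t n(1)] a by (simp only: mult_cancel_right) simp
  qed
  ultimately have "x 0 islimpt x ` {0<..}"
    by (simp add: closure_def)
  then show ?thesis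
    by (rule islimpt_subset) auto
qed

lemma rotation_orbit_uncountable_closure:
  fixes \<phi> :: "complex \<Rightarrow> complex" and x :: "nat \<Rightarrow> complex"
  assumes K: "compact K" "continuous_on K \<phi>" and xK: "range x \<subseteq> K"
    and rot: "\<And>n. \<phi> (x n) = cis (2 * pi * t) ^ n * a"
    and t: "t \<notin> \<rat>" and a: "a \<noteq> 0"
  shows "uncountable (closure (range x))"
proof -
  have "uncountable (sphere (0::complex) (norm a))"
    by (rule uncountable_sphere) (use a in simp)
  then have "uncountable (closure (x ` {0<..}))"
    using rotation_orbit_closure(2)[OF K xK rot t a] countable_subset
    by (blast dest: countable_image)
  then show ?thesis
    using closure_mono[of "x ` {0<..}" "range x"] countable_subset by blast
qed

section \<open>Resonance and roots of unity\<close>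

lemma exp_2pi_eq_cis: "exp (2 * pi * \<i> * complex_of_real t) = cis (2 * pi * t)"
  by (simp add: cis_conv_exp mult_ac)

lemma resonant_imp_root_of_unity:
  assumes "resonant f"
  shows "\<exists>b>0. deriv f 0 ^ b = 1"
proof -
  obtain t where t: "t \<in> \<rat>" "deriv f 0 = cis (2 * pi * t)"
    using assms unfolding resonant_def exp_2pi_eq_cis by blast
  obtain a b where ab: "b > 0" "t = of_int a / of_int b"
    using Rats_cases'[OF t(1)] by metis
  have "deriv f 0 ^ nat b = cis (real (nat b) * (2 * pi * t))"
    unfolding t(2) by (rule Complex.DeMoivre)
  also have "real (nat b) * (2 * pi * t) = 2 * pi * of_int a"
    using ab by (simp add: field_simps)
  also have "cis (2 * pi * of_int a) = 1"
    by simp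
  finally have "deriv f 0 ^ nat b = 1" .
  then show ?thesis
    using ab(1) by (intro exI[of _ "nat b"]) simp
qed

lemma common_root_of_unity:
  assumes "finite F" "\<forall>f\<in>F. resonant f"
  obtains N where "N > 0" "\<forall>f\<in>F. deriv f 0 ^ N = 1"
proof -
  have roots: "\<forall>f\<in>F. \<exists>b. b > 0 \<and> deriv f 0 ^ b = 1"
    using assms(2) by (simp add: resonant_imp_root_of_unity)
  obtain b where b: "\<forall>f\<in>F. b f > 0 \<and> deriv f 0 ^ b f = 1"
    using bchoice[OF roots] by blast
  show ?thesis
  proof (rule that)
    show "prod b F > 0"
      using b by (simp add: prod_pos)
    show "\<forall>f\<in>F. deriv f 0 ^ prod b F = 1"
    proof
      fix f assume f: "f \<in> F"
      obtain k where "prod b F = b f * k"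
        using dvd_prodI[OF assms(1) f] by (rule dvdE)
      then show "deriv f 0 ^ prod b F = 1"
        using b f by (simp add: power_mult)
    qed
  qed
qed

lemma root_of_unity_eq_power:
  assumes "N > 0" "z ^ N = 1"
  shows "\<exists>m. z = cis (2 * pi / real N) ^ m"
proof -
  obtain m where "z = cis (2 * pi * real m / real N)"
    using Complex.bij_betw_roots_unity[OF assms(1)] assms(2) unfolding bij_betw_def by auto
  then show ?thesis
    unfolding Complex.DeMoivre by (auto simp: mult.commute)
qed

lemma unimodular_deriv_resonant_or_real_nonresonant:
  assumes "norm (deriv f 0) = 1"
  shows "resonant f \<or> real_nonresonant f"
proof -
  have "deriv f 0 \<noteq> 0"
    using assms by auto
  then have "deriv f 0 = cis (2 * pi * (Arg (deriv f 0) / (2 * pi)))"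
    using assms cis_Arg[of "deriv f 0"] by (simp add: sgn_eq)
  then show ?thesis
    unfolding resonant_def real_nonresonant_def exp_2pi_eq_cis by blast
qed

section \<open>Groups generated by L-stable generators\<close>

locale L_stable_generators =
  fixes gens :: "((complex \<Rightarrow> complex) \<times> complex set) list"
  assumes good_reps: "good_reps gens" and L_stable: "L_stable gens"
begin

abbreviation grp :: "(complex \<Rightarrow> complex) set" where
  "grp \<equiv> gen_by (fst ` set gens)"

lemma grp_subgroup: "germ_subgroup grp"
  using germ_subgroup_gen_by[OF germ_subgroup_tracks_pseudo_orbits[OF good_reps]]
    generators_track_pseudo_orbits[OF good_reps] by blast

lemma grp_diff0: "g \<in> grp \<Longrightarrow> diff0 g"
  using grp_subgroup by (rule germ_subgroup_diff0)

lemma grp_comp: "g \<in> grp \<Longrightarrow> h \<in> grp \<Longrightarrow> g \<circ> h \<in> grp"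
  using grp_subgroup by (rule germ_subgroup_comp)

lemma grp_tracks_pseudo_orbits: "g \<in> grp \<Longrightarrow> tracks_pseudo_orbits gens g"
  using gen_by_least[OF germ_subgroup_tracks_pseudo_orbits[OF good_reps]]
    generators_track_pseudo_orbits[OF good_reps] by blast

lemma grp_bounded_iterates:
  assumes "g \<in> grp"
  obtains V where "open V" "0 \<in> V" "\<And>n. (g ^^ n) holomorphic_on V"
    "\<And>n z. z \<in> V \<Longrightarrow> norm ((g ^^ n) z) \<le> 1"
proof -
  obtain V where V: "open V" "0 \<in> V" "\<And>n z. z \<in> V \<Longrightarrow> (g ^^ n) z \<in> ball 0 1"
      "\<And>n. (g ^^ n) holomorphic_on V"
    using L_stable_iterates[OF L_stable grp_tracks_pseudo_orbits[OF assms] zero_less_one] by metis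
  have "norm ((g ^^ n) z) \<le> 1" if "z \<in> V" for n z
    using V(3)[OF that, of n] by simp
  then show ?thesis
    by (rule that[OF V(1,2,4)])
qed

lemma norm_deriv_grp: "g \<in> grp \<Longrightarrow> norm (deriv g 0) = 1"
proof -
  have le_1: "norm (deriv h 0) \<le> 1" if h: "h \<in> grp" for h
  proof -
    obtain V where "open V" "0 \<in> V" "\<And>n. (h ^^ n) holomorphic_on V"
        "\<And>n z. z \<in> V \<Longrightarrow> norm ((h ^^ n) z) \<le> 1"
      using grp_bounded_iterates[OF h] by metis
    then show ?thesis
      by (rule norm_deriv_le_1_if_bounded_iterates[OF grp_diff0[OF h]])
  qed
  assume g: "g \<in> grp"
  obtain k where k: "k \<in> grp" "germ_eq (g \<circ> k) id"
    using germ_subgroup_inverse[OF grp_subgroup g] by blast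
  have "1 = norm (deriv g 0) * norm (deriv k 0)"
    using deriv_mult_deriv_inverse[OF grp_diff0[OF g] grp_diff0[OF k(1)] k(2)]
    by (metis norm_mult norm_one)
  also have "\<dots> \<le> norm (deriv g 0) * 1"
    using le_1[OF k(1)] by (intro mult_left_mono) auto
  finally show ?thesis
    using le_1[OF g] by simp
qed

lemma grp_linearization:
  assumes g: "g \<in> grp"
  obtains \<phi> e where "e > 0" "\<phi> holomorphic_on ball 0 e" "inj_on \<phi> (ball 0 e)" "\<phi> 0 = 0"
    "\<And>z. z \<in> ball 0 e \<Longrightarrow> \<phi> (g z) = deriv g 0 * \<phi> z"
proof -
  obtain V where V: "open V" "0 \<in> V" "\<And>n. (g ^^ n) holomorphic_on V"
      "\<And>n z. z \<in> V \<Longrightarrow> norm ((g ^^ n) z) \<le> 1"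
    using grp_bounded_iterates[OF g] by metis
  obtain \<phi> where \<phi>: "\<phi> holomorphic_on V" "\<phi> 0 = 0" "deriv \<phi> 0 = 1"
      "\<And>z. z \<in> V \<Longrightarrow> g z \<in> V \<Longrightarrow> \<phi> (g z) = deriv g 0 * \<phi> z"
    using linearization_of_bounded_iterates[OF grp_diff0[OF g] norm_deriv_grp[OF g] V] by metis
  obtain r where r: "r > 0" "ball 0 r \<subseteq> V" "inj_on \<phi> (ball 0 r)"
    using has_complex_derivative_locally_injective[OF \<phi>(1) V(2,1)] \<phi>(3) by auto
  have "\<forall>\<^sub>F z in nhds 0. z \<in> ball (0::complex) r"
    by (rule eventually_nhds_in_open) (use r(1) in auto)
  moreover have "\<forall>\<^sub>F z in nhds 0. g z \<in> V"
    using eventually_nhds_0_comp_diff0[OF grp_diff0[OF g] eventually_nhds_in_open[OF V(1,2)]] .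
  ultimately have "\<forall>\<^sub>F z in nhds 0. z \<in> ball 0 r \<and> g z \<in> V"
    by (rule eventually_conj)
  then obtain e where e: "e > 0" "\<And>z. dist z 0 < e \<Longrightarrow> z \<in> ball 0 r \<and> g z \<in> V"
    unfolding eventually_nhds_metric by blast
  have inb: "z \<in> ball 0 r \<and> g z \<in> V" if "z \<in> ball 0 e" for z
    using e(2)[of z] that by (simp add: dist_commute)
  then have sub: "ball 0 e \<subseteq> ball (0::complex) r"
    by (intro subsetI) blast
  have gV: "g z \<in> V" if "z \<in> ball 0 e" for z
    using inb[OF that] ..
  show ?thesis
  proof (rule that[OF e(1)])
    show "\<phi> holomorphic_on ball 0 e"
      using \<phi>(1) sub r(2) by (blast intro: holomorphic_on_subset)
    show "inj_on \<phi> (ball 0 e)"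
      using r(3) sub by (rule inj_on_subset)
    show "\<phi> (g z) = deriv g 0 * \<phi> z" if "z \<in> ball 0 e" for z
      using \<phi>(4) that sub r(2) gV by blast
  qed (rule \<phi>(2))
qed

lemma grp_linearizable: "g \<in> grp \<Longrightarrow> linearizable g"
proof -
  assume "g \<in> grp"
  then obtain \<phi> e where \<phi>: "e > 0" "\<phi> holomorphic_on ball 0 e" "inj_on \<phi> (ball 0 e)" "\<phi> 0 = 0"
      "\<And>z. z \<in> ball 0 e \<Longrightarrow> \<phi> (g z) = deriv g 0 * \<phi> z"
    using grp_linearization by metis
  have "diff0 \<phi>"
    unfolding diff0_def using \<phi> by (intro exI[of _ "ball 0 e"]) auto
  moreover have "\<forall>\<^sub>F z in nhds 0. \<phi> (g z) = deriv g 0 * \<phi> z"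
    unfolding eventually_nhds using \<phi> by (intro exI[of _ "ball 0 e"]) auto
  ultimately show ?thesis
    unfolding linearizable_def by blast
qed

lemma grp_germ_eq_id_if_deriv_1:
  assumes g: "g \<in> grp" and "deriv g 0 = 1"
  shows "germ_eq g id"
proof -
  obtain \<phi> e where \<phi>: "e > 0" "inj_on \<phi> (ball 0 e)"
      "\<And>z. z \<in> ball 0 e \<Longrightarrow> \<phi> (g z) = deriv g 0 * \<phi> z"
    using grp_linearization[OF g] by metis
  have ball: "\<forall>\<^sub>F z in nhds 0. z \<in> ball (0::complex) e"
    by (rule eventually_nhds_in_open) (use \<phi>(1) in auto)
  then have "\<forall>\<^sub>F z in nhds 0. g z \<in> ball 0 e"
    by (rule eventually_nhds_0_comp_diff0[OF grp_diff0[OF g]])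
  with ball show ?thesis
    unfolding germ_eq_def
  proof eventually_elim
    case (elim z)
    then have "\<phi> (g z) = \<phi> z"
      using \<phi>(3) assms(2) by simp
    then show "g z = id z"
      using inj_onD[OF \<phi>(2)] elim by simp
  qed
qed

lemma grp_germ_eq_if_deriv_eq:
  assumes g: "g \<in> grp" and h: "h \<in> grp" and eq: "deriv g 0 = deriv h 0"
  shows "germ_eq g h"
proof -
  obtain k where k: "k \<in> grp" "germ_eq (h \<circ> k) id" "germ_eq (k \<circ> h) id"
    using germ_subgroup_inverse[OF grp_subgroup h] by blast
  have "deriv (g \<circ> k) 0 = 1"
    using deriv_comp_diff0[OF grp_diff0[OF g] grp_diff0[OF k(1)]] eq
      deriv_mult_deriv_inverse[OF grp_diff0[OF h] grp_diff0[OF k(1)] k(2)] by simp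
  then have "germ_eq (g \<circ> k) id"
    using grp_germ_eq_id_if_deriv_1 grp_comp[OF g k(1)] by blast
  then have "germ_eq (g \<circ> k \<circ> h) h"
    using germ_eq_comp_right[OF _ grp_diff0[OF h]] by fastforce
  moreover have "germ_eq (g \<circ> k \<circ> h) g"
    using germ_eq_comp_left[OF k(3), of g] by (simp add: o_assoc)
  ultimately show ?thesis
    using germ_eq_sym germ_eq_trans by blast
qed

lemma grp_abelian: "germ_abelian grp"
  unfolding germ_abelian_def
proof (intro ballI)
  fix g h assume g: "g \<in> grp" and h: "h \<in> grp"
  have "deriv (g \<circ> h) 0 = deriv (h \<circ> g) 0"
    using deriv_comp_diff0[OF grp_diff0[OF g] grp_diff0[OF h]]
      deriv_comp_diff0[OF grp_diff0[OF h] grp_diff0[OF g]] by simp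
  then show "germ_eq (g \<circ> h) (h \<circ> g)"
    using grp_germ_eq_if_deriv_eq[OF grp_comp[OF g h] grp_comp[OF h g]] by blast
qed

lemma germ_subgroup_roots_of_unity: "germ_subgroup {g \<in> grp. deriv g 0 ^ N = 1}"
  unfolding germ_subgroup_def
proof (intro conjI ballI allI impI)
  fix g g' assume "g \<in> {g \<in> grp. deriv g 0 ^ N = 1}" and "germ_eq g' g"
  then show "g' \<in> {g \<in> grp. deriv g 0 ^ N = 1}"
    using germ_subgroup_germ_eq[OF grp_subgroup] deriv_germ_eq by (metis (mono_tags) mem_Collect_eq)
next
  fix g h assume "g \<in> {g \<in> grp. deriv g 0 ^ N = 1}" "h \<in> {g \<in> grp. deriv g 0 ^ N = 1}"
  then show "g \<circ> h \<in> {g \<in> grp. deriv g 0 ^ N = 1}"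
    using grp_comp deriv_comp_diff0[OF grp_diff0 grp_diff0] by (simp add: power_mult_distrib)
next
  fix g assume g: "g \<in> {g \<in> grp. deriv g 0 ^ N = 1}"
  then obtain k where k: "k \<in> grp" "germ_eq (g \<circ> k) id" "germ_eq (k \<circ> g) id"
    using germ_subgroup_inverse[OF grp_subgroup] by blast
  have "(deriv g 0 * deriv k 0) ^ N = 1"
    using deriv_mult_deriv_inverse[OF grp_diff0 grp_diff0[OF k(1)] k(2)] g by simp
  then have "deriv k 0 ^ N = 1"
    using g by (simp add: power_mult_distrib)
  then show "\<exists>k\<in>{g \<in> grp. deriv g 0 ^ N = 1}. germ_eq (g \<circ> k) id \<and> germ_eq (k \<circ> g) id"
    using k by blast
qed (use grp_diff0 germ_subgroup_id[OF grp_subgroup] in auto)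

lemma germ_finite_if_roots_of_unity:
  assumes S: "S \<subseteq> grp" and N: "N > 0" and roots: "\<And>h. h \<in> S \<Longrightarrow> deriv h 0 ^ N = 1"
  shows "germ_finite S"
proof -
  let ?cls = "\<lambda>g. {h. germ_eq h g}"
  let ?d = "\<lambda>h. deriv h 0"
  have cls: "?cls h = ?cls (inv_into S ?d (?d h))" if h: "h \<in> S" for h
  proof (rule germ_class_eq)
    have mem: "?d h \<in> ?d ` S"
      using h by (rule imageI)
    show "germ_eq h (inv_into S ?d (?d h))"
      using f_inv_into_f[OF mem]
      by (intro grp_germ_eq_if_deriv_eq subsetD[OF S h] subsetD[OF S inv_into_into[OF mem]]) simp
  qed
  have "?cls ` S = (\<lambda>w. ?cls (inv_into S ?d w)) ` (?d ` S)"
    unfolding image_image using cls by (rule image_cong[OF refl])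
  moreover have "?d ` S \<subseteq> {z. z ^ N = 1}"
    using roots by auto
  moreover have "finite {z :: complex. z ^ N = 1}"
    using N by (intro finite_roots_unity) simp
  ultimately show ?thesis
    unfolding germ_finite_def by (metis finite_imageI finite_subset)
qed

lemma germ_eq_funpow_if_least_exponent:
  assumes SG: "germ_subgroup S" and S: "S \<subseteq> grp"
    and g: "g \<in> S" "deriv g 0 = \<omega> ^ d" "d > 0"
    and least: "\<forall>h\<in>S. \<forall>r>0. deriv h 0 = \<omega> ^ r \<longrightarrow> d \<le> r"
    and h: "h \<in> S" "deriv h 0 = \<omega> ^ m"
  shows "germ_eq h (g ^^ (m div d))"
proof -
  define q where "q = m div d"
  define r where "r = m mod d"
  obtain k where k: "k \<in> S" "germ_eq (g \<circ> k) id"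
    using germ_subgroup_inverse[OF SG g(1)] by blast
  have diff0: "diff0 g" "diff0 h" "diff0 k" "diff0 (k ^^ q)"
    using g(1) h(1) k(1) germ_subgroup_funpow[OF SG k(1)] germ_subgroup_diff0[OF SG] by blast+
  have gk: "\<omega> ^ d * deriv k 0 = 1"
    using deriv_mult_deriv_inverse[OF diff0(1,3) k(2)] g(2) by simp
  have hk: "h \<circ> k ^^ q \<in> S"
    using germ_subgroup_comp[OF SG h(1) germ_subgroup_funpow[OF SG k(1)]] .
  have "deriv (h \<circ> k ^^ q) 0 = \<omega> ^ (r + d * q) * deriv k 0 ^ q"
    using deriv_comp_diff0[OF diff0(2,4)] deriv_funpow[OF diff0(3)] h(2)
    by (simp add: q_def r_def)
  also have "\<dots> = \<omega> ^ r"
    using gk by (simp add: power_add power_mult power_mult_distrib[symmetric])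
  finally have "deriv (h \<circ> k ^^ q) 0 = \<omega> ^ r" .
  moreover have "r < d"
    unfolding r_def using g(3) by simp
  ultimately have "\<not> 0 < r"
    using least hk by (meson not_le)
  then have "m = d * q"
    using mult_div_mod_eq[of d m] unfolding q_def r_def by simp
  then have "deriv h 0 = deriv (g ^^ q) 0"
    using h(2) g(2) deriv_funpow[OF diff0(1)] by (simp add: power_mult)
  then show ?thesis
    using grp_germ_eq_if_deriv_eq S h(1) germ_subgroup_funpow[OF SG g(1)] unfolding q_def by blast
qed

text \<open>The generator is an element whose multiplier \<open>\<omega>\<^sup>d\<close>, \<open>\<omega> = e\<^sup>2\<^sup>\<pi>\<^sup>i\<^sup>/\<^sup>N\<close>, has the least positive
  exponent \<open>d\<close>.\<close>

lemma cyclic_if_roots_of_unity: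
  assumes SG: "germ_subgroup S" and S: "S \<subseteq> grp" and N: "N > 0"
    and roots: "\<And>h. h \<in> S \<Longrightarrow> deriv h 0 ^ N = 1"
  shows "\<exists>g\<in>S. \<forall>h\<in>S. \<exists>n. germ_eq h (g ^^ n)"
proof -
  define \<omega> where "\<omega> = cis (2 * pi / real N)"
  define P where "P = {k. 0 < k \<and> (\<exists>h\<in>S. deriv h 0 = \<omega> ^ k)}"
  have "N \<in> P"
    unfolding P_def \<omega>_def Complex.DeMoivre using N germ_subgroup_id[OF SG]
    by (auto intro!: bexI[of _ id])
  define d where "d = (LEAST k. k \<in> P)"
  have "d \<in> P"
    unfolding d_def using \<open>N \<in> P\<close> by (rule LeastI)
  then obtain g where g: "g \<in> S" "deriv g 0 = \<omega> ^ d" "d > 0"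
    unfolding P_def by blast
  have least: "\<forall>h\<in>S. \<forall>r>0. deriv h 0 = \<omega> ^ r \<longrightarrow> d \<le> r"
    unfolding d_def P_def by (auto intro: Least_le)
  have "\<exists>n. germ_eq h (g ^^ n)" if h: "h \<in> S" for h
  proof -
    obtain m where m: "deriv h 0 = \<omega> ^ m"
      using root_of_unity_eq_power[OF N roots[OF h]] unfolding \<omega>_def by blast
    show ?thesis
      using germ_eq_funpow_if_least_exponent[OF SG S g least h m] by blast
  qed
  then show ?thesis
    using g(1) by blast
qed

lemma finite_cyclic_gen_by_resonant:
  assumes F: "finite F" "F \<subseteq> grp" "\<forall>f\<in>F. resonant f"
  shows "finite_cyclic (gen_by F)"
proof -
  obtain N where N: "N > 0" "\<forall>f\<in>F. deriv f 0 ^ N = 1"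
    using common_root_of_unity F(1,3) by blast
  have "gen_by F \<subseteq> {g \<in> grp. deriv g 0 ^ N = 1}"
    using gen_by_least[OF germ_subgroup_roots_of_unity] F(2) N(2) by blast
  then have sub: "gen_by F \<subseteq> grp" and roots: "\<And>h. h \<in> gen_by F \<Longrightarrow> deriv h 0 ^ N = 1"
    by auto
  show ?thesis
    unfolding finite_cyclic_def
    using germ_finite_if_roots_of_unity[OF sub N(1) roots]
      cyclic_if_roots_of_unity[OF germ_subgroup_gen_by[OF grp_subgroup F(2)] sub N(1) roots]
    by blast
qed

lemma germ_finite_gen_by_resonant:
  assumes "finite F" "F \<subseteq> grp" "\<forall>h\<in>gen_by F. resonant h"
  shows "germ_finite (gen_by F)"
  using finite_cyclic_gen_by_resonant[OF assms(1,2)] assms(3) gen_by_subset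
  unfolding finite_cyclic_def by blast

lemma resonant_or_real_nonresonant: "g \<in> grp \<Longrightarrow> resonant g \<or> real_nonresonant g"
  using unimodular_deriv_resonant_or_real_nonresonant norm_deriv_grp by blast

lemma circle_type_if_real_nonresonant: "f \<in> grp \<Longrightarrow> real_nonresonant f \<Longrightarrow> circle_type grp"
  unfolding circle_type_def using grp_abelian grp_linearizable by blast

lemma nonresonant_iterates:
  assumes f: "f \<in> grp" "real_nonresonant f"
  obtains W where "open W" "0 \<in> W" "\<And>p n. p \<in> W \<Longrightarrow> (f ^^ n) p \<in> pseudo_orbit gens p"
    "\<And>p. p \<in> W - {0} \<Longrightarrow>
      p islimpt range (\<lambda>n. (f ^^ n) p) \<and> uncountable (closure (range (\<lambda>n. (f ^^ n) p)))"
proof -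
  obtain t where t: "t \<notin> \<rat>" "deriv f 0 = cis (2 * pi * t)"
    using f(2) unfolding real_nonresonant_def exp_2pi_eq_cis by blast
  obtain \<phi> e where \<phi>: "e > 0" "\<phi> holomorphic_on ball 0 e" "inj_on \<phi> (ball 0 e)" "\<phi> 0 = 0"
      "\<And>z. z \<in> ball 0 e \<Longrightarrow> \<phi> (f z) = deriv f 0 * \<phi> z"
    using grp_linearization[OF f(1)] by metis
  define K where "K = cball (0::complex) (e / 2)"
  have K: "compact K" "K \<subseteq> ball 0 e"
    unfolding K_def using \<phi>(1) by auto
  have "\<phi> holomorphic_on K"
    using \<phi>(2) K(2) by (rule holomorphic_on_subset)
  then have \<phi>K: "continuous_on K \<phi>" "inj_on \<phi> K"
    using inj_on_subset[OF \<phi>(3) K(2)] by (auto intro: holomorphic_on_imp_continuous_on)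
  obtain W where W: "open W" "0 \<in> W" "W \<subseteq> ball 0 (e / 2)"
      "\<And>n z. z \<in> W \<Longrightarrow> (f ^^ n) z \<in> pseudo_orbit gens z"
      "\<And>n z. z \<in> W \<Longrightarrow> (f ^^ n) z \<in> ball 0 (e / 2)"
      "\<And>n. (f ^^ n) holomorphic_on W"
    using L_stable_iterates[OF L_stable grp_tracks_pseudo_orbits[OF f(1)] half_gt_zero[OF \<phi>(1)]]
    by metis
  show ?thesis
  proof (rule that[OF W(1,2,4)])
    fix p assume p: "p \<in> W - {0}"
    have iter_K: "(f ^^ n) p \<in> K" for n
      using W(5)[of p n] p ball_subset_cball unfolding K_def by blast
    then have xK: "range (\<lambda>n. (f ^^ n) p) \<subseteq> K"
      by blast
    have rot: "\<phi> ((f ^^ n) p) = cis (2 * pi * t) ^ n * \<phi> p" for n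
      unfolding t(2)[symmetric]
      by (rule funpow_conjugate_linear[where S = "ball 0 e"]) (use iter_K K(2) \<phi>(5) in blast)+
    have "\<phi> p \<noteq> 0"
      using inj_onD[OF \<phi>(3), of p 0] \<phi>(1,4) p iter_K[of 0] K(2) by auto
    with rotation_orbit_islimpt[OF K(1) \<phi>K xK rot t(1)]
      rotation_orbit_uncountable_closure[OF K(1) \<phi>K(1) xK rot t(1)]
    show "p islimpt range (\<lambda>n. (f ^^ n) p) \<and> uncountable (closure (range (\<lambda>n. (f ^^ n) p)))"
      by simp
  qed
qed

lemma nonresonant_pseudo_orbits:
  assumes "f \<in> grp" "real_nonresonant f"
  obtains W where "open W" "0 \<in> W"
    "\<And>p. p \<in> W - {0} \<Longrightarrow> recurrent_orbit gens p \<and> \<not> closed_off_origin (pseudo_orbit gens p)"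
proof -
  obtain W where W: "open W" "0 \<in> W" "\<And>p n. p \<in> W \<Longrightarrow> (f ^^ n) p \<in> pseudo_orbit gens p"
      "\<And>p. p \<in> W - {0} \<Longrightarrow>
        p islimpt range (\<lambda>n. (f ^^ n) p) \<and> uncountable (closure (range (\<lambda>n. (f ^^ n) p)))"
    using nonresonant_iterates[OF assms] by metis
  show ?thesis
  proof (rule that[OF W(1,2)])
    fix p assume p: "p \<in> W - {0}"
    have O: "range (\<lambda>n. (f ^^ n) p) \<subseteq> pseudo_orbit gens p"
      using W(3) p by blast
    show "recurrent_orbit gens p \<and> \<not> closed_off_origin (pseudo_orbit gens p)"
      unfolding recurrent_orbit_def
      using islimpt_subset[OF _ O] not_closed_off_origin_if_uncountable_closure[OF O] W(4)[OF p]
      by blast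
  qed
qed

end

theorem lemma2p1:
  fixes gens :: "((complex \<Rightarrow> complex) \<times> complex set) list"
    and G :: "(complex \<Rightarrow> complex) set"
  assumes reps: "good_reps gens"
    and G_def: "G = gen_by (fst ` set gens)"
    and stable: "L_stable gens"
  shows "(finite_cyclic G \<or> circle_type G)
    \<and> (\<forall>F. finite F \<and> F \<subseteq> G \<and> (\<forall>h\<in>gen_by F. resonant h) \<longrightarrow> germ_finite (gen_by F))
    \<and> (\<exists>W. open W \<and> 0 \<in> W \<and>
         (\<forall>p\<in>W - {0}.
            ((closed_off_origin (pseudo_orbit gens p) \<or> closed (pseudo_orbit gens p)) \<longrightarrow> germ_finite G)
          \<and> (\<not> recurrent_orbit gens p \<longrightarrow> germ_finite G)))"
proof -
  interpret L_stable_generators gens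
    using reps stable by unfold_locales
  have resonant_finite:
    "\<forall>F. finite F \<and> F \<subseteq> G \<and> (\<forall>h\<in>gen_by F. resonant h) \<longrightarrow> germ_finite (gen_by F)"
    unfolding G_def using germ_finite_gen_by_resonant by blast
  show ?thesis
  proof (cases "\<forall>f\<in>fst ` set gens. resonant f")
    case True
    then have "finite_cyclic G"
      unfolding G_def by (intro finite_cyclic_gen_by_resonant gen_by_subset) auto
    then show ?thesis
      using resonant_finite unfolding finite_cyclic_def by (intro conjI disjI1 exI[of _ UNIV]) auto
  next
    case False
    then obtain f where f: "f \<in> G" "real_nonresonant f"
      using resonant_or_real_nonresonant gen_by_subset unfolding G_def by blast
    obtain W where W: "open W" "0 \<in> W"
        "\<And>p. p \<in> W - {0} \<Longrightarrow> recurrent_orbit gens p \<and> \<not> closed_off_origin (pseudo_orbit gens p)"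
      using nonresonant_pseudo_orbits[OF f[unfolded G_def]] by metis
    then show ?thesis
      using circle_type_if_real_nonresonant[OF f[unfolded G_def]] resonant_finite
        closed_imp_closed_off_origin unfolding G_def by blast
  qed
qed

end
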